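(* Let $(q_n),(r_n)$ be complex sequences vanishing faster than any negative power of $|n|$ as $n\to\pm\infty$ with $1-q_nr_n\neq0$ and $1+q_nr_{n+1}\ne0$ for all $n$, and let $D_n,E_n,D_\infty,E_\infty,u_n,v_n,p_n,s_n$ be as in the context. Then at $z=1$ the Jost solutions of system (Q) and of system (U) with potentials $(u,v)$ and $(p,s)$ are $$\begin{bmatrix}\bar\psi_n^{(q,r)}(1)&\psi_n^{(q,r)}(1)\end{bmatrix}=\begin{bmatrix}1&0\\ \sum_{j=n}^\infty r_j&1\end{bmatrix},$$ $$\begin{bmatrix}\bar\psi_n^{(u,v)}(1)&\psi_n^{(u,v)}(1)\end{bmatrix}=\begin{bmatrix}\frac{E_{n-1}}{E_\infty}&\frac{E_{n-1}}{D_\infty}\sum_{j=n}^\infty q_j\\ -r_n\frac{D_{n-1}}{E_\infty}&\frac{D_{n-1}}{D_\infty}\big(1-r_n\sum_{j=n}^\infty q_j\big)\end{bmatrix},$$ $$\begin{bmatrix}\bar\psi_n^{(p,s)}(1)&\psi_n^{(p,s)}(1)\end{bmatrix}=\begin{bmatrix}\frac{E_{n-1}}{E_\infty}\big(1+q_n\sum_{j=n+1}^\infty r_j\big)&q_n\frac{E_{n-1}}{D_\infty}\\ \frac{D_{n}}{E_\infty}\sum_{j=n+1}^\infty r_j&\frac{D_{n}}{D_\infty}\end{bmatrix}.$$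
   Context: System (Q): $\begin{bmatrix}\alpha_n\\ \beta_n\end{bmatrix}=\begin{bmatrix} z & (z-z^{-1})q_n\\ z r_n & z^{-1}+(z-z^{-1})q_nr_n\end{bmatrix}\begin{bmatrix}\alpha_{n+1}\\ \beta_{n+1}\end{bmatrix}$; system (U) with potentials $(a,b)$: $\begin{bmatrix}\xi_n\\ \eta_n\end{bmatrix}=\begin{bmatrix} z & z a_n\\ z^{-1}b_n & z^{-1}\end{bmatrix}\begin{bmatrix}\xi_{n+1}\\ \eta_{n+1}\end{bmatrix}$. $D_n=\prod_{j\le n}(1-q_jr_j)$, $E_n=\prod_{j\le n}(1+q_jr_{j+1})$, $D_\infty=\prod_{j\in\mathbb Z}(1-q_jr_j)$, $E_\infty=\prod_{j\in\mathbb Z}(1+q_jr_{j+1})$; $u_n=q_nE_{n-1}/D_n$, $v_n=(-r_n+r_{n+1}-q_nr_nr_{n+1})D_{n-1}/E_n$, $p_n=(q_n-q_{n+1}-q_nq_{n+1}r_{n+1})E_{n-1}/D_{n+1}$, $s_n=r_{n+1}D_n/E_n$. For $|z|=1$ the Jost solutions $\psi_n$ and $\bar\psi_n$ of each system (overbar not complex conjugation) are the unique solutions with $\psi_n=\begin{bmatrix}o(1)\\ z^n[1+o(1)]\end{bmatrix}$ and $\bar\psi_n=\begin{bmatrix}z^{-n}[1+o(1)]\\ o(1)\end{bmatrix}$ as $n\to+\infty$; $\begin{bmatrix}\bar\psi_n&\psi_n\end{bmatrix}$ is the $2\times2$ matrix with these columns. *)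

theory Defs
  imports "HOL-Analysis.Analysis"
begin

definition rapidly_decaying :: "(int \<Rightarrow> complex) \<Rightarrow> bool" where
  "rapidly_decaying q \<longleftrightarrow>
     (\<forall>k::nat. ((\<lambda>n. real_of_int \<bar>n\<bar> ^ k * cmod (q n)) \<longlongrightarrow> 0) at_top
            \<and> ((\<lambda>n. real_of_int \<bar>n\<bar> ^ k * cmod (q n)) \<longlongrightarrow> 0) at_bot)"

definition solQ :: "(int \<Rightarrow> complex) \<Rightarrow> (int \<Rightarrow> complex) \<Rightarrow> complex \<Rightarrow> (int \<Rightarrow> complex \<times> complex) \<Rightarrow> bool" where
  "solQ q r z \<psi> \<longleftrightarrow> (\<forall>n.
     fst (\<psi> n) = z * fst (\<psi> (n+1)) + (z - inverse z) * q n * snd (\<psi> (n+1)) \<and>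
     snd (\<psi> n) = z * r n * fst (\<psi> (n+1)) + (inverse z + (z - inverse z) * q n * r n) * snd (\<psi> (n+1)))"

definition solU :: "(int \<Rightarrow> complex) \<Rightarrow> (int \<Rightarrow> complex) \<Rightarrow> complex \<Rightarrow> (int \<Rightarrow> complex \<times> complex) \<Rightarrow> bool" where
  "solU a b z \<psi> \<longleftrightarrow> (\<forall>n.
     fst (\<psi> n) = z * fst (\<psi> (n+1)) + z * a n * snd (\<psi> (n+1)) \<and>
     snd (\<psi> n) = inverse z * b n * fst (\<psi> (n+1)) + inverse z * snd (\<psi> (n+1)))"

definition jost_asym :: "complex \<Rightarrow> (int \<Rightarrow> complex \<times> complex) \<Rightarrow> bool" where
  "jost_asym z \<psi> \<longleftrightarrow> ((\<lambda>n. fst (\<psi> n)) \<longlongrightarrow> 0) at_top \<and>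
                        ((\<lambda>n. snd (\<psi> n) / z powi n) \<longlongrightarrow> 1) at_top"

definition jostbar_asym :: "complex \<Rightarrow> (int \<Rightarrow> complex \<times> complex) \<Rightarrow> bool" where
  "jostbar_asym z \<psi> \<longleftrightarrow> ((\<lambda>n. fst (\<psi> n) / z powi (-n)) \<longlongrightarrow> 1) at_top \<and>
                           ((\<lambda>n. snd (\<psi> n)) \<longlongrightarrow> 0) at_top"

definition jostQ where "jostQ q r z = (THE \<psi>. solQ q r z \<psi> \<and> jost_asym z \<psi>)"
definition jostbarQ where "jostbarQ q r z = (THE \<psi>. solQ q r z \<psi> \<and> jostbar_asym z \<psi>)"
definition jostU where "jostU a b z = (THE \<psi>. solU a b z \<psi> \<and> jost_asym z \<psi>)"
definition jostbarU where "jostbarU a b z = (THE \<psi>. solU a b z \<psi> \<and> jostbar_asym z \<psi>)"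

text \<open>D_n = prod_{j<=n} (1 - q_j r_j), E_n = prod_{j<=n} (1 + q_j r_{j+1}) (infinite products).\<close>
definition Dn :: "(int \<Rightarrow> complex) \<Rightarrow> (int \<Rightarrow> complex) \<Rightarrow> int \<Rightarrow> complex" where
  "Dn q r n = (\<Prod>k. 1 - q (n - int k) * r (n - int k))"
definition En :: "(int \<Rightarrow> complex) \<Rightarrow> (int \<Rightarrow> complex) \<Rightarrow> int \<Rightarrow> complex" where
  "En q r n = (\<Prod>k. 1 + q (n - int k) * r (n - int k + 1))"

text \<open>D_infty, E_infty: products over all of Z (limits of symmetric partial products).\<close>
definition Dinf :: "(int \<Rightarrow> complex) \<Rightarrow> (int \<Rightarrow> complex) \<Rightarrow> complex" where
  "Dinf q r = lim (\<lambda>N::nat. \<Prod>j\<in>{- int N..int N}. 1 - q j * r j)"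
definition Einf :: "(int \<Rightarrow> complex) \<Rightarrow> (int \<Rightarrow> complex) \<Rightarrow> complex" where
  "Einf q r = lim (\<lambda>N::nat. \<Prod>j\<in>{- int N..int N}. 1 + q j * r (j + 1))"

definition tailsum :: "(int \<Rightarrow> complex) \<Rightarrow> int \<Rightarrow> complex" where
  "tailsum f n = (\<Sum>k. f (n + int k))"

definition uu where "uu q r n = q n * En q r (n-1) / Dn q r n"
definition vv where "vv q r n = (- r n + r (n+1) - q n * r n * r (n+1)) * Dn q r (n-1) / En q r n"
definition pp where "pp q r n = (q n - q (n+1) - q n * q (n+1) * r (n+1)) * En q r (n-1) / Dn q r (n+1)"
definition ss where "ss q r n = r (n+1) * Dn q r n / En q r n"

end

theory Submission
  imports Defs
begin

(* At z = 1 system (Q) becomes system (U) with potentials (0, r). For potentials that are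
   absolutely summable at +infinity, a solution of (U) at z = 1 is determined by its limit at
   +infinity: the difference d of two such solutions satisfies
   |d_n| <= (1 + |a_n| + |b_n|) |d_(n+1)|, and a backward discrete Gronwall argument forces d = 0.
   It therefore suffices to check that each displayed column solves the recursion, which follows
   from D_n = (1 - q_n r_n) D_(n-1), E_n = (1 + q_n r_(n+1)) E_(n-1) and the tail-sum identity
   T_n = f_n + T_(n+1), and that it has the prescribed limit, which follows from
   D_n --> D_infinity <> 0, E_n --> E_infinity <> 0 and T_n --> 0. Rapid decay enters only through
   the absolute summability of q and r at both ends. *)

definition abs_summable_at_top :: "(int \<Rightarrow> 'a::real_normed_vector) \<Rightarrow> bool" where
  "abs_summable_at_top f \<longleftrightarrow> summable (\<lambda>k. norm (f (int k)))"

lemma filterlim_at_top_int_iff_nat: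
  "filterlim f F (at_top :: int filter) \<longleftrightarrow> filterlim (\<lambda>k. f (int k)) F sequentially"
  using filterlim_int_of_nat_at_topD filterlim_compose[OF _ filterlim_int_sequentially] by blast

lemma filterlim_add_const_at_top:
  "filterlim (\<lambda>n. n + c) at_top (at_top :: 'a::linordered_ab_group_add filter)"
  unfolding filterlim_at_top eventually_at_top_linorder
proof
  fix Z :: 'a
  show "\<exists>N. \<forall>n\<ge>N. Z \<le> n + c" by (rule exI[of _ "Z - c"]) (simp add: diff_le_eq)
qed

lemma tendsto_shift_at_top:
  fixes c :: "'a::linordered_ab_group_add"
  shows "(f \<longlongrightarrow> L) at_top \<Longrightarrow> ((\<lambda>n. f (n + c)) \<longlongrightarrow> L) at_top"
  by (rule filterlim_compose[OF _ filterlim_add_const_at_top])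

lemma abs_summable_at_top_imp_summable_from:
  assumes "abs_summable_at_top f"
  shows "summable (\<lambda>k. norm (f (n + int k)))"
proof -
  have "summable (\<lambda>k. norm (f (n + int (k + nat (- n)))))" if "n < 0"
  proof -
    have "(\<lambda>k. norm (f (n + int (k + nat (- n))))) = (\<lambda>k. norm (f (int k)))"
      using that by auto
    then show ?thesis using assms by (simp add: abs_summable_at_top_def)
  qed
  moreover have "summable (\<lambda>k. norm (f (int (k + nat n))))" if "n \<ge> 0"
    using assms unfolding abs_summable_at_top_def
    by (subst summable_iff_shift[where f = "\<lambda>k. norm (f (int k))"])
  ultimately show ?thesis
    using summable_iff_shift[of "\<lambda>k. norm (f (n + int k))" "nat (- n)"]
    by (cases "n < 0") (auto simp: add.commute)
qed

lemma abs_summable_at_top_shift: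
  "abs_summable_at_top f \<Longrightarrow> abs_summable_at_top (\<lambda>j. f (j + c))"
  using abs_summable_at_top_imp_summable_from[of f c] by (simp add: abs_summable_at_top_def add.commute)

lemma abs_summable_at_top_add:
  "abs_summable_at_top f \<Longrightarrow> abs_summable_at_top g \<Longrightarrow> abs_summable_at_top (\<lambda>j. f j + g j)"
  unfolding abs_summable_at_top_def
  by (rule summable_comparison_test'[where N = 0 and g = "\<lambda>k. norm (f (int k)) + norm (g (int k))",
        OF summable_add]) (auto intro: norm_triangle_ineq)

lemma abs_summable_at_top_minus:
  "abs_summable_at_top f \<Longrightarrow> abs_summable_at_top (\<lambda>j. - f j)"
  by (simp add: abs_summable_at_top_def)

lemma abs_summable_at_top_diff:
  "abs_summable_at_top f \<Longrightarrow> abs_summable_at_top g \<Longrightarrow> abs_summable_at_top (\<lambda>j. f j - g j)"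
  using abs_summable_at_top_add[of f "\<lambda>j. - g j"] abs_summable_at_top_minus[of g] by simp

lemma abs_summable_at_top_mult_tendsto:
  fixes f g :: "int \<Rightarrow> 'a::real_normed_algebra"
  assumes "abs_summable_at_top f" and "(g \<longlongrightarrow> L) at_top"
  shows "abs_summable_at_top (\<lambda>j. f j * g j)"
proof -
  have "\<forall>\<^sub>F j in at_top. norm (g j) \<le> norm L + 1"
    using tendstoD[OF assms(2) zero_less_one]
    by eventually_elim (metis dist_norm norm_triangle_ineq2 add.commute diff_le_eq less_imp_le order_trans)
  then have "\<forall>\<^sub>F k in sequentially. norm (g (int k)) \<le> norm L + 1"
    by (rule eventually_compose_filterlim[OF _ filterlim_int_sequentially])
  then have "\<forall>\<^sub>F k in sequentially. norm (norm (f (int k) * g (int k))) \<le> (norm L + 1) * norm (f (int k))"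
  proof eventually_elim
    case (elim k)
    then show ?case
      using norm_mult_ineq[of "f (int k)" "g (int k)"] mult_left_mono[OF elim, of "norm (f (int k))"]
      by (simp add: mult.commute)
  qed
  moreover have "summable (\<lambda>k. (norm L + 1) * norm (f (int k)))"
    using assms(1) by (simp add: abs_summable_at_top_def summable_mult)
  ultimately show ?thesis
    unfolding abs_summable_at_top_def by (rule summable_comparison_test_ev)
qed

lemma abs_summable_at_top_tendsto_0:
  fixes f :: "int \<Rightarrow> 'a::real_normed_vector"
  assumes "abs_summable_at_top f"
  shows "(f \<longlongrightarrow> 0) at_top"
  using summable_LIMSEQ_zero[OF assms[unfolded abs_summable_at_top_def]]
  by (simp add: filterlim_at_top_int_iff_nat tendsto_norm_zero_iff)

lemma tailsum_rec:
  assumes "abs_summable_at_top f"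
  shows "tailsum f n = f n + tailsum f (n + 1)"
proof -
  have "summable (\<lambda>k. f (n + int k))"
    using abs_summable_at_top_imp_summable_from[OF assms] by (rule summable_norm_cancel)
  from suminf_split_head[OF this] show ?thesis
    by (simp add: tailsum_def algebra_simps)
qed

lemma tailsum_tendsto_0:
  assumes "abs_summable_at_top f"
  shows "(tailsum f \<longlongrightarrow> 0) at_top"
proof -
  have "summable (\<lambda>k. f (int k))"
    using assms unfolding abs_summable_at_top_def by (rule summable_norm_cancel)
  then have "(\<lambda>m. suminf (\<lambda>k. f (int k)) - (\<Sum>k<m. f (int k))) \<longlonglongrightarrow>
      suminf (\<lambda>k. f (int k)) - suminf (\<lambda>k. f (int k))"
    by (intro tendsto_intros summable_LIMSEQ)
  moreover have "tailsum f (int m) = suminf (\<lambda>k. f (int k)) - (\<Sum>k<m. f (int k))" for m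
    using suminf_minus_initial_segment[OF \<open>summable _\<close>, of m] by (simp add: tailsum_def add.commute)
  ultimately show ?thesis
    by (simp add: filterlim_at_top_int_iff_nat)
qed

lemma rapidly_decaying_reflect:
  assumes "rapidly_decaying q"
  shows "rapidly_decaying (\<lambda>j. q (- j))"
  using assms unfolding rapidly_decaying_def filterlim_def at_bot_mirror[where 'a = int]
  by (simp add: filtermap_filtermap flip: at_top_mirror)

lemma rapidly_decaying_imp_abs_summable_at_top:
  assumes "rapidly_decaying q"
  shows "abs_summable_at_top q"
proof -
  have "((\<lambda>n. real_of_int \<bar>n\<bar> ^ 2 * cmod (q n)) \<longlongrightarrow> 0) at_top"
    using assms unfolding rapidly_decaying_def by blast
  then have "\<forall>\<^sub>F k in sequentially. real k ^ 2 * cmod (q (int k)) < 1"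
    by (auto simp: filterlim_at_top_int_iff_nat dest: order_tendstoD(2)[of _ 0 _ 1])
  then have "\<forall>\<^sub>F k in sequentially. norm (norm (q (int k))) \<le> inverse (real k ^ 2)"
    using eventually_gt_at_top[of "0::nat"]
    by eventually_elim (simp add: field_simps)
  then show ?thesis
    unfolding abs_summable_at_top_def
    by (rule summable_comparison_test_ev[OF _ inverse_power_summable]) simp
qed

definition prod_upto :: "(int \<Rightarrow> 'a::real_normed_field) \<Rightarrow> int \<Rightarrow> 'a" where
  "prod_upto c n = (\<Prod>k. c (n - int k))"

locale summable_product =
  fixes c :: "int \<Rightarrow> 'a::{real_normed_field, banach}"
  assumes nonzero: "\<And>j. c j \<noteq> 0"
    and summable_at_top: "abs_summable_at_top (\<lambda>j. c j - 1)"
    and summable_at_bot: "abs_summable_at_top (\<lambda>j. c (- j) - 1)"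
begin

lemma convergent_prod_downwards: "convergent_prod (\<lambda>k. c (n - int k))"
  using abs_summable_at_top_imp_summable_from[OF summable_at_bot, of "- n"]
  by (intro abs_convergent_prod_imp_convergent_prod summable_imp_abs_convergent_prod) simp

lemma convergent_prod_upwards: "convergent_prod (\<lambda>k. c (n + int k))"
  using abs_summable_at_top_imp_summable_from[OF summable_at_top, of n]
  by (intro abs_convergent_prod_imp_convergent_prod summable_imp_abs_convergent_prod) simp

lemma prod_upto_nonzero: "prod_upto c n \<noteq> 0"
  unfolding prod_upto_def by (intro prodinf_nonzero convergent_prod_downwards nonzero)

lemma prod_upto_eq_partial_prod_mult:
  "prod_upto c n = (\<Prod>k<m. c (n - int k)) * prod_upto c (n - int m)"
proof -
  have "(\<lambda>k. c (n - int k)) has_prod ((\<Prod>k<m. c (n - int k)) * (\<Prod>k. c (n - int (k + m))))"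
    by (rule has_prod_ignore_initial_segment'[OF convergent_prod_downwards])
  then show ?thesis
    unfolding prod_upto_def by (simp add: has_prod_iff algebra_simps)
qed

lemma prod_upto_rec: "prod_upto c n = c n * prod_upto c (n - 1)"
  using prod_upto_eq_partial_prod_mult[of n 1] by simp

lemma prod_upto_split:
  assumes "a \<le> b"
  shows "prod_upto c b = (\<Prod>j\<in>{a<..b}. c j) * prod_upto c a"
  using assms
proof (induction b rule: int_ge_induct)
  case base
  then show ?case by simp
next
  case (step b)
  have "{a<..b + 1} = insert (b + 1) {a<..b}"
    using step.hyps by auto
  then show ?case
    using prod_upto_rec[of "b + 1"] step.IH by simp
qed

lemma prod_upto_tendsto_at_top:
  obtains L where "L \<noteq> 0" and "(prod_upto c \<longlongrightarrow> L) at_top"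
proof
  let ?L = "(\<Prod>k. c (1 + int k)) * prod_upto c 0"
  have "(\<lambda>m. (\<Prod>k<m. c (1 + int k)) * prod_upto c 0) \<longlonglongrightarrow> ?L"
    using convergent_prod_LIMSEQ[OF convergent_prod_upwards]
    by (intro tendsto_mult tendsto_const) (simp add: LIMSEQ_lessThan_iff_atMost)
  moreover have "prod_upto c (int m) = (\<Prod>k<m. c (1 + int k)) * prod_upto c 0" for m
  proof -
    have "{0<..int m} = (\<lambda>k. 1 + int k) ` {..<m}"
      by (auto simp: image_iff intro!: bexI[of _ "nat (_ - 1)"])
    then show ?thesis
      using prod_upto_split[of 0 "int m"] by (simp add: prod.reindex inj_on_def)
  qed
  ultimately show "(prod_upto c \<longlongrightarrow> ?L) at_top"
    by (simp add: filterlim_at_top_int_iff_nat)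
  show "?L \<noteq> 0"
    by (simp add: prodinf_nonzero convergent_prod_upwards nonzero prod_upto_nonzero)
qed

lemma prod_upto_tendsto_1_at_bot: "(\<lambda>N. prod_upto c (- int N)) \<longlonglongrightarrow> 1"
proof -
  have "(\<lambda>N. \<Prod>k<N. c (- int k)) \<longlonglongrightarrow> prod_upto c 0"
    using convergent_prod_LIMSEQ[OF convergent_prod_downwards[of 0]]
    by (simp add: prod_upto_def LIMSEQ_lessThan_iff_atMost)
  then have "(\<lambda>N. prod_upto c 0 / (\<Prod>k<N. c (- int k))) \<longlonglongrightarrow> prod_upto c 0 / prod_upto c 0"
    by (intro tendsto_divide tendsto_const prod_upto_nonzero)
  moreover have "prod_upto c (- int N) = prod_upto c 0 / (\<Prod>k<N. c (- int k))" for N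
    using prod_upto_eq_partial_prod_mult[of 0 N] by (simp add: nonzero field_simps)
  ultimately show ?thesis
    using prod_upto_nonzero by simp
qed

lemma LIMSEQ_prod_symmetric:
  assumes "(prod_upto c \<longlongrightarrow> L) at_top"
  shows "(\<lambda>N. \<Prod>j\<in>{- int N..int N}. c j) \<longlonglongrightarrow> L"
proof -
  have "(\<lambda>N. prod_upto c (int N) / prod_upto c (- int (Suc N))) \<longlonglongrightarrow> L / 1"
    using assms LIMSEQ_Suc[OF prod_upto_tendsto_1_at_bot]
    by (intro tendsto_divide) (simp_all add: filterlim_at_top_int_iff_nat)
  moreover have "prod_upto c (int N) = (\<Prod>j\<in>{- int N..int N}. c j) * prod_upto c (- int (Suc N))" for N
  proof -
    have "{- int (Suc N)<..int N} = {- int N..int N}" by auto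
    then show ?thesis using prod_upto_split[of "- int (Suc N)" "int N"] by simp
  qed
  ultimately show ?thesis
    using prod_upto_nonzero by simp
qed

(* D_infinity and E_infinity are defined through symmetric partial products; this identifies
   them with the limits of D_n and E_n. *)
lemma prod_upto_tendsto_symmetric_lim:
  shows "lim (\<lambda>N. \<Prod>j\<in>{- int N..int N}. c j) \<noteq> 0"
    and "(prod_upto c \<longlongrightarrow> lim (\<lambda>N. \<Prod>j\<in>{- int N..int N}. c j)) at_top"
proof -
  obtain L where "L \<noteq> 0" and L: "(prod_upto c \<longlongrightarrow> L) at_top"
    by (rule prod_upto_tendsto_at_top)
  moreover have "lim (\<lambda>N. \<Prod>j\<in>{- int N..int N}. c j) = L"
    using LIMSEQ_prod_symmetric[OF L] by (rule limI)
  ultimately show "lim (\<lambda>N. \<Prod>j\<in>{- int N..int N}. c j) \<noteq> 0"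
    and "(prod_upto c \<longlongrightarrow> lim (\<lambda>N. \<Prod>j\<in>{- int N..int N}. c j)) at_top"
    by simp_all
qed

end

lemma discrete_gronwall_vanishing:
  fixes x c :: "int \<Rightarrow> real"
  assumes x_nonneg: "\<And>n. 0 \<le> x n" and c_nonneg: "\<And>n. 0 \<le> c n"
    and c_summable: "abs_summable_at_top c"
    and step: "\<And>n. x n \<le> (1 + c n) * x (n + 1)"
    and x_tendsto: "(x \<longlongrightarrow> 0) at_top"
  shows "x m = 0"
proof -
  have iterate: "x n \<le> exp (\<Sum>i<k. c (n + int i)) * x (n + int k)" for k n
  proof (induction k arbitrary: n)
    case 0
    then show ?case by simp
  next
    case (Suc k)
    have "x n \<le> exp (c n) * x (n + 1)"
      by (rule order_trans[OF step mult_right_mono[OF exp_ge_add_one_self x_nonneg]])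
    also have "\<dots> \<le> exp (c n) * (exp (\<Sum>i<k. c (n + 1 + int i)) * x (n + 1 + int k))"
      using Suc.IH by (intro mult_left_mono) auto
    also have "\<dots> = exp (\<Sum>i<Suc k. c (n + int i)) * x (n + int (Suc k))"
      by (simp add: sum.lessThan_Suc_shift exp_add algebra_simps del: sum.lessThan_Suc)
    finally show ?case .
  qed
  have summable: "summable (\<lambda>i. c (m + int i))"
    using abs_summable_at_top_imp_summable_from[OF c_summable, of m] c_nonneg by simp
  define S where "S = (\<Sum>i. c (m + int i))"
  have bound: "x m \<le> exp S * x (m + int k)" for k
  proof -
    have "(\<Sum>i<k. c (m + int i)) \<le> S"
      unfolding S_def by (intro sum_le_suminf summable) (simp_all add: c_nonneg)
    then show ?thesis
      using order_trans[OF iterate[of m k] mult_right_mono[OF _ x_nonneg]] by simp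
  qed
  have "(\<lambda>k. exp S * x (m + int k)) \<longlonglongrightarrow> 0"
    using tendsto_mult_right[OF tendsto_shift_at_top[OF x_tendsto, of m], of "exp S"]
    by (simp add: filterlim_at_top_int_iff_nat add.commute)
  then have "x m \<le> 0"
    by (rule tendsto_lowerbound) (simp_all add: bound)
  then show ?thesis
    using x_nonneg[of m] by simp
qed

lemma solU_one_iff:
  "solU a b 1 \<psi> \<longleftrightarrow> (\<forall>n. fst (\<psi> n) = fst (\<psi> (n + 1)) + a n * snd (\<psi> (n + 1)) \<and>
                          snd (\<psi> n) = b n * fst (\<psi> (n + 1)) + snd (\<psi> (n + 1)))"
  by (simp add: solU_def)

lemma solU_diff:
  assumes "solU a b z \<phi>" and "solU a b z \<psi>"
  shows "solU a b z (\<lambda>n. \<phi> n - \<psi> n)"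
  unfolding solU_def
proof
  fix n
  let ?d = "\<lambda>n. \<phi> n - \<psi> n"
  show "fst (?d n) = z * fst (?d (n + 1)) + z * a n * snd (?d (n + 1)) \<and>
        snd (?d n) = inverse z * b n * fst (?d (n + 1)) + inverse z * snd (?d (n + 1))"
    using assms[unfolded solU_def, THEN spec, of n] by (simp add: algebra_simps)
qed

lemma solU_one_vanishing_at_top:
  assumes "abs_summable_at_top a" and "abs_summable_at_top b"
    and "solU a b 1 d" and "(d \<longlongrightarrow> 0) at_top"
  shows "d n = 0"
proof -
  define x where "x n = norm (fst (d n)) + norm (snd (d n))" for n
  have "x n = 0" for n
  proof (rule discrete_gronwall_vanishing[where c = "\<lambda>n. norm (a n) + norm (b n)"])
    show "abs_summable_at_top (\<lambda>n. norm (a n) + norm (b n))"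
      using abs_summable_at_top_add[of "\<lambda>n. norm (a n)" "\<lambda>n. norm (b n)"] assms(1,2)
      by (simp add: abs_summable_at_top_def)
    show "x n \<le> (1 + (norm (a n) + norm (b n))) * x (n + 1)" for n
    proof -
      let ?f = "fst (d (n + 1))" and ?s = "snd (d (n + 1))"
      have "fst (d n) = ?f + a n * ?s" and "snd (d n) = b n * ?f + ?s"
        using assms(3)[unfolded solU_one_iff, THEN spec, of n] by simp_all
      then have "norm (fst (d n)) \<le> norm ?f + norm (a n) * norm ?s"
        and "norm (snd (d n)) \<le> norm (b n) * norm ?f + norm ?s"
        using norm_triangle_ineq[of ?f "a n * ?s"] norm_triangle_ineq[of "b n * ?f" ?s]
        by (simp_all add: norm_mult)
      moreover have "norm (a n) * norm ?s \<le> norm (a n) * x (n + 1)"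
        and "norm (b n) * norm ?f \<le> norm (b n) * x (n + 1)"
        by (intro mult_left_mono; simp add: x_def)+
      moreover have "(1 + (norm (a n) + norm (b n))) * x (n + 1)
          = x (n + 1) + norm (a n) * x (n + 1) + norm (b n) * x (n + 1)"
        by (simp add: algebra_simps)
      ultimately show ?thesis
        unfolding x_def by linarith
    qed
    show "(x \<longlongrightarrow> 0) at_top"
      using tendsto_add[OF tendsto_norm[OF tendsto_fst[OF assms(4)]] tendsto_norm[OF tendsto_snd[OF assms(4)]]]
      by (simp add: x_def [abs_def])
  qed (simp_all add: x_def)
  then show ?thesis
    by (simp add: x_def prod_eq_iff add_nonneg_eq_0_iff)
qed

lemma solU_one_unique:
  assumes "abs_summable_at_top a" and "abs_summable_at_top b"
    and "solU a b 1 \<phi>" and "solU a b 1 \<psi>"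
    and "(\<phi> \<longlongrightarrow> L) at_top" and "(\<psi> \<longlongrightarrow> L) at_top"
  shows "\<phi> = \<psi>"
proof -
  have "\<phi> n - \<psi> n = 0" for n
    using assms tendsto_diff[OF assms(5,6)] by (intro solU_one_vanishing_at_top solU_diff) simp_all
  then show ?thesis
    by (simp add: fun_eq_iff)
qed

lemma jost_asym_one_iff: "jost_asym 1 \<psi> \<longleftrightarrow> (\<psi> \<longlongrightarrow> (0, 1)) at_top"
  using tendsto_Pair[of "\<lambda>n. fst (\<psi> n)" 0 at_top "\<lambda>n. snd (\<psi> n)" 1]
  by (auto simp: jost_asym_def dest: tendsto_fst tendsto_snd)

lemma jostbar_asym_one_iff: "jostbar_asym 1 \<psi> \<longleftrightarrow> (\<psi> \<longlongrightarrow> (1, 0)) at_top"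
  using tendsto_Pair[of "\<lambda>n. fst (\<psi> n)" 1 at_top "\<lambda>n. snd (\<psi> n)" 0]
  by (auto simp: jostbar_asym_def dest: tendsto_fst tendsto_snd)

lemma jostU_one_eqI:
  assumes "abs_summable_at_top a" and "abs_summable_at_top b"
    and "solU a b 1 \<psi>" and "(\<psi> \<longlongrightarrow> (0, 1)) at_top"
  shows "jostU a b 1 = \<psi>"
  unfolding jostU_def jost_asym_one_iff
  using assms solU_one_unique[OF assms(1,2)] by (intro the_equality) blast+

lemma jostbarU_one_eqI:
  assumes "abs_summable_at_top a" and "abs_summable_at_top b"
    and "solU a b 1 \<psi>" and "(\<psi> \<longlongrightarrow> (1, 0)) at_top"
  shows "jostbarU a b 1 = \<psi>"
  unfolding jostbarU_def jostbar_asym_one_iff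
  using assms solU_one_unique[OF assms(1,2)] by (intro the_equality) blast+

lemma jostQ_one_eq_jostU: "jostQ q r 1 = jostU (\<lambda>_. 0) r 1"
  by (simp add: jostQ_def jostU_def solQ_def solU_def)

lemma jostbarQ_one_eq_jostbarU: "jostbarQ q r 1 = jostbarU (\<lambda>_. 0) r 1"
  by (simp add: jostbarQ_def jostbarU_def solQ_def solU_def)

locale summable_potentials =
  fixes q r :: "int \<Rightarrow> complex"
  assumes q_at_top: "abs_summable_at_top q" and q_at_bot: "abs_summable_at_top (\<lambda>j. q (- j))"
    and r_at_top: "abs_summable_at_top r" and r_at_bot: "abs_summable_at_top (\<lambda>j. r (- j))"
    and D_factor_nonzero: "\<And>j. 1 - q j * r j \<noteq> 0"
    and E_factor_nonzero: "\<And>j. 1 + q j * r (j + 1) \<noteq> 0"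
begin

lemma q_tendsto_0: "(q \<longlongrightarrow> 0) at_top"
  by (rule abs_summable_at_top_tendsto_0[OF q_at_top])

lemma r_tendsto_0: "(r \<longlongrightarrow> 0) at_top"
  by (rule abs_summable_at_top_tendsto_0[OF r_at_top])

lemma r_next_tendsto_0: "((\<lambda>j. r (j + 1)) \<longlongrightarrow> 0) at_top"
  by (rule tendsto_shift_at_top[OF r_tendsto_0])

sublocale D: summable_product "\<lambda>j. 1 - q j * r j"
proof
  show "1 - q j * r j \<noteq> 0" for j
    by (rule D_factor_nonzero)
  show "abs_summable_at_top (\<lambda>j. 1 - q j * r j - 1)"
    using abs_summable_at_top_minus[OF abs_summable_at_top_mult_tendsto[OF q_at_top r_tendsto_0]]
    by simp
  show "abs_summable_at_top (\<lambda>j. 1 - q (- j) * r (- j) - 1)"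
    using abs_summable_at_top_minus[OF abs_summable_at_top_mult_tendsto[OF q_at_bot
          abs_summable_at_top_tendsto_0[OF r_at_bot]]]
    by simp
qed

sublocale E: summable_product "\<lambda>j. 1 + q j * r (j + 1)"
proof
  show "1 + q j * r (j + 1) \<noteq> 0" for j
    by (rule E_factor_nonzero)
  show "abs_summable_at_top (\<lambda>j. 1 + q j * r (j + 1) - 1)"
    using abs_summable_at_top_mult_tendsto[OF q_at_top r_next_tendsto_0] by simp
  show "abs_summable_at_top (\<lambda>j. 1 + q (- j) * r (- j + 1) - 1)"
    using abs_summable_at_top_mult_tendsto[OF q_at_bot
        tendsto_shift_at_top[OF abs_summable_at_top_tendsto_0[OF r_at_bot], of "- 1"]]
    by simp
qed

lemma Dn_eq_prod_upto: "Dn q r = prod_upto (\<lambda>j. 1 - q j * r j)"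
  by (simp add: fun_eq_iff Dn_def prod_upto_def)

lemma En_eq_prod_upto: "En q r = prod_upto (\<lambda>j. 1 + q j * r (j + 1))"
  by (simp add: fun_eq_iff En_def prod_upto_def)

lemma Dn_rec: "Dn q r n = (1 - q n * r n) * Dn q r (n - 1)"
  unfolding Dn_eq_prod_upto by (rule D.prod_upto_rec)

lemma En_rec: "En q r n = (1 + q n * r (n + 1)) * En q r (n - 1)"
  unfolding En_eq_prod_upto by (rule E.prod_upto_rec)

lemma Dn_nonzero: "Dn q r n \<noteq> 0"
  unfolding Dn_eq_prod_upto by (rule D.prod_upto_nonzero)

lemma En_nonzero: "En q r n \<noteq> 0"
  unfolding En_eq_prod_upto by (rule E.prod_upto_nonzero)

lemma Dinf_nonzero: "Dinf q r \<noteq> 0"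
  unfolding Dinf_def by (rule D.prod_upto_tendsto_symmetric_lim(1))

lemma Einf_nonzero: "Einf q r \<noteq> 0"
  unfolding Einf_def by (rule E.prod_upto_tendsto_symmetric_lim(1))

lemma Dn_tendsto: "(Dn q r \<longlongrightarrow> Dinf q r) at_top"
  unfolding Dinf_def Dn_eq_prod_upto by (rule D.prod_upto_tendsto_symmetric_lim(2))

lemma En_tendsto: "(En q r \<longlongrightarrow> Einf q r) at_top"
  unfolding Einf_def En_eq_prod_upto by (rule E.prod_upto_tendsto_symmetric_lim(2))

lemma Dn_prev_tendsto: "((\<lambda>n. Dn q r (n - 1)) \<longlongrightarrow> Dinf q r) at_top"
  using tendsto_shift_at_top[OF Dn_tendsto, of "- 1"] by simp

lemma Dn_next_tendsto: "((\<lambda>n. Dn q r (n + 1)) \<longlongrightarrow> Dinf q r) at_top"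
  by (rule tendsto_shift_at_top[OF Dn_tendsto])

lemma En_prev_tendsto: "((\<lambda>n. En q r (n - 1)) \<longlongrightarrow> Einf q r) at_top"
  using tendsto_shift_at_top[OF En_tendsto, of "- 1"] by simp

lemma uu_abs_summable: "abs_summable_at_top (uu q r)"
proof -
  have "((\<lambda>j. En q r (j - 1) / Dn q r j) \<longlongrightarrow> Einf q r / Dinf q r) at_top"
    by (rule tendsto_divide[OF En_prev_tendsto Dn_tendsto Dinf_nonzero])
  from abs_summable_at_top_mult_tendsto[OF q_at_top this] show ?thesis
    by (simp add: uu_def [abs_def])
qed

lemma vv_abs_summable: "abs_summable_at_top (vv q r)"
proof -
  have "((\<lambda>j. r j * r (j + 1)) \<longlongrightarrow> 0) at_top"
    using tendsto_mult[OF r_tendsto_0 r_next_tendsto_0] by simp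
  then have "abs_summable_at_top (\<lambda>j. - r j + r (j + 1) - q j * (r j * r (j + 1)))"
    by (intro abs_summable_at_top_diff abs_summable_at_top_add abs_summable_at_top_minus
        abs_summable_at_top_shift abs_summable_at_top_mult_tendsto q_at_top r_at_top)
  moreover have "((\<lambda>j. Dn q r (j - 1) / En q r j) \<longlongrightarrow> Dinf q r / Einf q r) at_top"
    by (rule tendsto_divide[OF Dn_prev_tendsto En_tendsto Einf_nonzero])
  ultimately show ?thesis
    using abs_summable_at_top_mult_tendsto by (fastforce simp: vv_def [abs_def] mult.assoc)
qed

lemma pp_abs_summable: "abs_summable_at_top (pp q r)"
proof -
  have "((\<lambda>j. q (j + 1) * r (j + 1)) \<longlongrightarrow> 0) at_top"
    using tendsto_mult[OF tendsto_shift_at_top[OF q_tendsto_0] r_next_tendsto_0] by simp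
  then have "abs_summable_at_top (\<lambda>j. q j - q (j + 1) - q j * (q (j + 1) * r (j + 1)))"
    by (intro abs_summable_at_top_diff abs_summable_at_top_shift abs_summable_at_top_mult_tendsto
        q_at_top)
  moreover have "((\<lambda>j. En q r (j - 1) / Dn q r (j + 1)) \<longlongrightarrow> Einf q r / Dinf q r) at_top"
    by (rule tendsto_divide[OF En_prev_tendsto Dn_next_tendsto Dinf_nonzero])
  ultimately show ?thesis
    using abs_summable_at_top_mult_tendsto by (fastforce simp: pp_def [abs_def] mult.assoc)
qed

lemma ss_abs_summable: "abs_summable_at_top (ss q r)"
proof -
  have "((\<lambda>j. Dn q r j / En q r j) \<longlongrightarrow> Dinf q r / Einf q r) at_top"
    by (rule tendsto_divide[OF Dn_tendsto En_tendsto Einf_nonzero])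
  from abs_summable_at_top_mult_tendsto[OF abs_summable_at_top_shift[OF r_at_top] this]
  show ?thesis
    by (simp add: ss_def [abs_def])
qed

lemma jostbarQ_one: "jostbarQ q r 1 n = (1, tailsum r n)"
proof -
  have "jostbarU (\<lambda>_. 0) r 1 = (\<lambda>n. (1, tailsum r n))"
  proof (rule jostbarU_one_eqI)
    show "abs_summable_at_top (\<lambda>_::int. 0::complex)"
      by (simp add: abs_summable_at_top_def)
    show "solU (\<lambda>_. 0) r 1 (\<lambda>n. (1, tailsum r n))"
      by (simp add: solU_one_iff tailsum_rec[OF r_at_top, symmetric])
    show "((\<lambda>n. (1, tailsum r n)) \<longlongrightarrow> (1, 0)) at_top"
      by (intro tendsto_Pair tendsto_const tailsum_tendsto_0 r_at_top)
  qed (rule r_at_top)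
  then show ?thesis
    by (simp add: jostbarQ_one_eq_jostbarU)
qed

lemma jostQ_one: "jostQ q r 1 n = (0, 1)"
proof -
  have "jostU (\<lambda>_. 0) r 1 = (\<lambda>n. (0, 1))"
    by (rule jostU_one_eqI[OF _ r_at_top]) (simp_all add: abs_summable_at_top_def solU_one_iff)
  then show ?thesis
    by (simp add: jostQ_one_eq_jostU)
qed

lemma jostbarU_uu_vv_one:
  "jostbarU (uu q r) (vv q r) 1 n = (En q r (n - 1) / Einf q r, - r n * Dn q r (n - 1) / Einf q r)"
proof -
  let ?\<psi> = "\<lambda>n. (En q r (n - 1) / Einf q r, - r n * Dn q r (n - 1) / Einf q r)"
  have "En q r (n - 1) / Einf q r = En q r n / Einf q r + uu q r n * (- r (n + 1) * Dn q r n / Einf q r)"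
    for n
    using Dn_nonzero[of n] Einf_nonzero by (simp add: uu_def En_rec[of n] field_simps)
  moreover have "- r n * Dn q r (n - 1) / Einf q r
      = vv q r n * (En q r n / Einf q r) + - r (n + 1) * Dn q r n / Einf q r" for n
    using En_nonzero[of n] Einf_nonzero by (simp add: vv_def Dn_rec[of n] field_simps)
  ultimately have "solU (uu q r) (vv q r) 1 ?\<psi>"
    unfolding solU_one_iff fst_conv snd_conv add_diff_cancel_right' by blast
  moreover have "(?\<psi> \<longlongrightarrow> (1, 0)) at_top"
    using En_prev_tendsto Dn_prev_tendsto r_tendsto_0 Einf_nonzero
    by (auto intro!: tendsto_eq_intros)
  ultimately show ?thesis
    by (simp add: jostbarU_one_eqI uu_abs_summable vv_abs_summable)
qed

lemma jostU_uu_vv_one: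
  "jostU (uu q r) (vv q r) 1 n
    = (En q r (n - 1) / Dinf q r * tailsum q n, Dn q r (n - 1) / Dinf q r * (1 - r n * tailsum q n))"
proof -
  let ?\<psi> = "\<lambda>n. (En q r (n - 1) / Dinf q r * tailsum q n,
                   Dn q r (n - 1) / Dinf q r * (1 - r n * tailsum q n))"
  have "En q r (n - 1) / Dinf q r * tailsum q n
      = En q r n / Dinf q r * tailsum q (n + 1)
        + uu q r n * (Dn q r n / Dinf q r * (1 - r (n + 1) * tailsum q (n + 1)))" for n
    using Dn_nonzero[of n] Dinf_nonzero
    by (simp add: uu_def En_rec[of n] tailsum_rec[OF q_at_top, of n] field_simps)
  moreover have "Dn q r (n - 1) / Dinf q r * (1 - r n * tailsum q n)
      = vv q r n * (En q r n / Dinf q r * tailsum q (n + 1))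
        + Dn q r n / Dinf q r * (1 - r (n + 1) * tailsum q (n + 1))" for n
    using En_nonzero[of n] Dinf_nonzero
    by (simp add: vv_def Dn_rec[of n] tailsum_rec[OF q_at_top, of n] field_simps)
  ultimately have "solU (uu q r) (vv q r) 1 ?\<psi>"
    unfolding solU_one_iff fst_conv snd_conv add_diff_cancel_right' by blast
  moreover have "(?\<psi> \<longlongrightarrow> (0, 1)) at_top"
    using En_prev_tendsto Dn_prev_tendsto r_tendsto_0 tailsum_tendsto_0[OF q_at_top] Dinf_nonzero
    by (auto intro!: tendsto_eq_intros)
  ultimately show ?thesis
    by (simp add: jostU_one_eqI uu_abs_summable vv_abs_summable)
qed

lemma jostbarU_pp_ss_one:
  "jostbarU (pp q r) (ss q r) 1 n
    = (En q r (n - 1) / Einf q r * (1 + q n * tailsum r (n + 1)), Dn q r n / Einf q r * tailsum r (n + 1))"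
proof -
  let ?\<psi> = "\<lambda>n. (En q r (n - 1) / Einf q r * (1 + q n * tailsum r (n + 1)),
                   Dn q r n / Einf q r * tailsum r (n + 1))"
  have "En q r (n - 1) / Einf q r * (1 + q n * tailsum r (n + 1))
      = En q r n / Einf q r * (1 + q (n + 1) * tailsum r (n + 1 + 1))
        + pp q r n * (Dn q r (n + 1) / Einf q r * tailsum r (n + 1 + 1))" for n
    using Dn_nonzero[of "n + 1"] Einf_nonzero unfolding tailsum_rec[OF r_at_top, of "n + 1"]
    by (simp add: pp_def En_rec[of n] field_simps)
  moreover have "Dn q r n / Einf q r * tailsum r (n + 1)
      = ss q r n * (En q r n / Einf q r * (1 + q (n + 1) * tailsum r (n + 1 + 1)))
        + Dn q r (n + 1) / Einf q r * tailsum r (n + 1 + 1)" for n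
    using En_nonzero[of n] Einf_nonzero
    unfolding Dn_rec[of "n + 1"] tailsum_rec[OF r_at_top, of "n + 1"]
    by (simp add: ss_def field_simps)
  ultimately have "solU (pp q r) (ss q r) 1 ?\<psi>"
    unfolding solU_one_iff fst_conv snd_conv add_diff_cancel_right' by blast
  moreover have "(?\<psi> \<longlongrightarrow> (1, 0)) at_top"
    using En_prev_tendsto Dn_tendsto q_tendsto_0 tendsto_shift_at_top[OF tailsum_tendsto_0[OF r_at_top]]
      Einf_nonzero
    by (auto intro!: tendsto_eq_intros)
  ultimately show ?thesis
    by (simp add: jostbarU_one_eqI pp_abs_summable ss_abs_summable)
qed

lemma jostU_pp_ss_one:
  "jostU (pp q r) (ss q r) 1 n = (q n * En q r (n - 1) / Dinf q r, Dn q r n / Dinf q r)"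
proof -
  let ?\<psi> = "\<lambda>n. (q n * En q r (n - 1) / Dinf q r, Dn q r n / Dinf q r)"
  have "q n * En q r (n - 1) / Dinf q r
      = q (n + 1) * En q r n / Dinf q r + pp q r n * (Dn q r (n + 1) / Dinf q r)" for n
    using Dn_nonzero[of "n + 1"] Dinf_nonzero by (simp add: pp_def En_rec[of n] field_simps)
  moreover have "Dn q r n / Dinf q r
      = ss q r n * (q (n + 1) * En q r n / Dinf q r) + Dn q r (n + 1) / Dinf q r" for n
    using En_nonzero[of n] Dinf_nonzero unfolding Dn_rec[of "n + 1"] by (simp add: ss_def field_simps)
  ultimately have "solU (pp q r) (ss q r) 1 ?\<psi>"
    unfolding solU_one_iff fst_conv snd_conv add_diff_cancel_right' by blast
  moreover have "(?\<psi> \<longlongrightarrow> (0, 1)) at_top"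
    using En_prev_tendsto Dn_tendsto q_tendsto_0 Dinf_nonzero
    by (auto intro!: tendsto_eq_intros)
  ultimately show ?thesis
    by (simp add: jostU_one_eqI pp_abs_summable ss_abs_summable)
qed

end

theorem theorem3p7:
  fixes q r :: "int \<Rightarrow> complex" and n :: int
  assumes "rapidly_decaying q" and "rapidly_decaying r"
    and "\<And>j. 1 - q j * r j \<noteq> 0" and "\<And>j. 1 + q j * r (j+1) \<noteq> 0"
  shows "jostbarQ q r 1 n = (1, tailsum r n) \<and> jostQ q r 1 n = (0, 1)
    \<and> jostbarU (uu q r) (vv q r) 1 n
        = (En q r (n-1) / Einf q r, - r n * Dn q r (n-1) / Einf q r)
    \<and> jostU (uu q r) (vv q r) 1 n
        = (En q r (n-1) / Dinf q r * tailsum q n, Dn q r (n-1) / Dinf q r * (1 - r n * tailsum q n))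
    \<and> jostbarU (pp q r) (ss q r) 1 n
        = (En q r (n-1) / Einf q r * (1 + q n * tailsum r (n+1)), Dn q r n / Einf q r * tailsum r (n+1))
    \<and> jostU (pp q r) (ss q r) 1 n
        = (q n * En q r (n-1) / Dinf q r, Dn q r n / Dinf q r)"
proof -
  interpret summable_potentials q r
    using assms
    by unfold_locales
      (simp_all add: rapidly_decaying_imp_abs_summable_at_top rapidly_decaying_reflect)
  show ?thesis
    by (simp add: jostbarQ_one jostQ_one jostbarU_uu_vv_one jostU_uu_vv_one
        jostbarU_pp_ss_one jostU_pp_ss_one)
qed

end
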